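(* Let $S$ be a finite semigroup. Then $S$ is DSC if and only if $S$ is a group.
   Context: A diagonal subsemigroup of $S\times S$ is a subsemigroup containing $\{(s,s)\colon s\in S\}$; a congruence is a symmetric and transitive diagonal subsemigroup; $S$ is DSC if every diagonal subsemigroup of $S\times S$ is a congruence on $S$. *)

theory Defs
  imports Main
begin

definition diagonal_subsemigroup :: "('a::semigroup_mult \<times> 'a) set \<Rightarrow> bool" where
  "diagonal_subsemigroup R \<longleftrightarrow>
     (\<forall>s. (s, s) \<in> R) \<and>
     (\<forall>a b c d. (a, b) \<in> R \<longrightarrow> (c, d) \<in> R \<longrightarrow> (a * c, b * d) \<in> R)"

definition is_congruence :: "('a::semigroup_mult \<times> 'a) set \<Rightarrow> bool" where
  "is_congruence R \<longleftrightarrow> diagonal_subsemigroup R \<and> sym R \<and> trans R"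

definition DSC :: "'a::semigroup_mult itself \<Rightarrow> bool" where
  "DSC _ \<longleftrightarrow> (\<forall>R :: ('a \<times> 'a) set. diagonal_subsemigroup R \<longrightarrow> is_congruence R)"

definition is_group :: "'a::semigroup_mult itself \<Rightarrow> bool" where
  "is_group _ \<longleftrightarrow> (\<exists>e::'a. (\<forall>x. e * x = x \<and> x * e = x) \<and> (\<forall>x. \<exists>y. x * y = e \<and> y * x = e))"

end

theory Submission
  imports Defs
begin

text \<open>
  A finite group is DSC: a diagonal subsemigroup R of G \<times> G is finite and left multiplication
  by (a, b) \<in> R permutes it, so R contains (a\<inverse>, b\<inverse>); this yields symmetry, and transitivity
  holds in any group.

  Conversely, for every subset A of S^1 the syntactic quasi-order
  x \<preceq> y \<longleftrightarrow> (\<forall>u v \<in> S^1. u y v \<in> A \<longrightarrow> u x v \<in> A) is a diagonal subsemigroup, so in a DSC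
  semigroup it is symmetric. For A the ideal generated by a this says that S is simple. For
  A = aS it says that b \<in> aS, because ab \<preceq> b: this step uses simplicity together with the
  stability of finite semigroups (x <=_R y and y <=_J x imply y <=_R x). Dually b \<in> Sa, so S is a group.
\<close>

datatype 'a with_one = One | El 'a

instantiation with_one :: (semigroup_mult) monoid_mult
begin

definition one_with_one :: "'a with_one" where "one_with_one = One"

fun times_with_one :: "'a with_one \<Rightarrow> 'a with_one \<Rightarrow> 'a with_one" where
  "times_with_one One w = w"
| "times_with_one (El x) One = El x"
| "times_with_one (El x) (El y) = El (x * y)"

instance proof
  fix u v w :: "'a with_one"
  show "u * v * w = u * (v * w)" by (cases u; cases v; cases w) (simp_all add: mult.assoc)
  show "1 * u = u" by (simp add: one_with_one_def)
  show "u * 1 = u" by (cases u) (simp_all add: one_with_one_def)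
qed

end

lemma UNIV_with_one: "(UNIV :: 'a with_one set) = insert One (range El)"
  by (metis UNIV_eq_I insert_iff rangeI with_one.exhaust)

instance with_one :: (finite) finite
  by standard (simp add: UNIV_with_one)

lemma One_eq_1: "One = 1"
  by (simp add: one_with_one_def)

lemma El_times: "El (x * y) = El x * El y"
  by simp

lemma El_times_in_range: "El x * w \<in> range El"
  by (cases w) auto

lemma finite_monoid_idempotent_power:
  fixes p :: "'a::{monoid_mult,finite}"
  obtains N where "N \<ge> 1" "p ^ N * p ^ N = p ^ N"
proof -
  have "\<not> inj (\<lambda>n. p ^ Suc n)"
    using finite_imageD[of "\<lambda>n. p ^ Suc n" UNIV] infinite_UNIV_nat by auto
  then obtain i j where ij: "i < j" "p ^ Suc i = p ^ Suc j"
    by (metis injI linorder_neqE_nat)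
  define k where "k = j - i"
  have k: "k \<ge> 1" and period: "p ^ (Suc i + k) = p ^ Suc i"
    using ij by (simp_all add: k_def)
  have periods: "p ^ (n + c * k) = p ^ n" if "Suc i \<le> n" for n c
  proof (induction c)
    case (Suc c)
    have "n + Suc c * k = (n - Suc i) + (Suc i + k) + c * k"
      using that by simp
    then have "p ^ (n + Suc c * k) = p ^ (n - Suc i) * p ^ (Suc i + k) * p ^ (c * k)"
      by (simp only: power_add)
    also have "\<dots> = p ^ ((n - Suc i) + Suc i + c * k)"
      unfolding period by (simp only: power_add)
    also have "\<dots> = p ^ (n + c * k)"
      using that by simp
    finally show ?case
      using Suc by simp
  qed simp
  have "Suc i \<le> Suc i * k"
    using k by (metis mult.right_neutral mult_le_mono2)
  show thesis
  proof
    show "Suc i * k \<ge> 1" using k by simp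
    show "p ^ (Suc i * k) * p ^ (Suc i * k) = p ^ (Suc i * k)"
      using periods[of "Suc i * k" "Suc i"] \<open>Suc i \<le> Suc i * k\<close>
      by (simp add: power_add[symmetric] mult.commute)
  qed
qed

lemma finite_monoid_stable:
  fixes x y :: "'a::{monoid_mult,finite}"
  assumes "x = y * s" and "y = p * x * q"
  shows "\<exists>t. y = x * t"
proof -
  define r where "r = s * q"
  have "y = p * (y * s) * q"
    using assms by simp
  then have y: "y = p * y * r"
    by (simp add: r_def mult.assoc)
  have iterate: "y = p ^ n * y * r ^ n" for n
  proof (induction n)
    case (Suc n)
    have "p ^ Suc n * y * r ^ Suc n = p ^ n * (p * y * r) * r ^ n"
      by (simp only: power_Suc2[of p] power_Suc[of r] mult.assoc)
    then show ?case
      using Suc y by simp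
  qed simp
  obtain N where N: "N \<ge> 1" "p ^ N * p ^ N = p ^ N"
    by (rule finite_monoid_idempotent_power)
  have "p ^ N * (p ^ N * y * r ^ N) = p ^ N * y * r ^ N"
    using N(2) by (metis mult.assoc)
  then have "p ^ N * y = y"
    by (metis iterate)
  then have "y = y * r ^ N"
    by (metis iterate)
  also have "r ^ N = s * q * r ^ (N - 1)"
    using N(1) by (simp add: r_def power_eq_if)
  finally have "y = x * (q * r ^ (N - 1))"
    using assms(1) by (simp add: mult.assoc)
  then show ?thesis ..
qed

definition syntactic_preorder :: "'a::semigroup_mult with_one set \<Rightarrow> ('a \<times> 'a) set" where
  "syntactic_preorder A = {(x, y). \<forall>u v. u * El y * v \<in> A \<longrightarrow> u * El x * v \<in> A}"

lemma syntactic_preorderI: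
  "(\<And>u v. u * El y * v \<in> A \<Longrightarrow> u * El x * v \<in> A) \<Longrightarrow> (x, y) \<in> syntactic_preorder A"
  by (simp add: syntactic_preorder_def)

lemma diagonal_subsemigroup_syntactic_preorder:
  "diagonal_subsemigroup (syntactic_preorder A)"
  unfolding diagonal_subsemigroup_def
proof (intro conjI allI impI)
  fix s show "(s, s) \<in> syntactic_preorder A"
    by (rule syntactic_preorderI)
next
  fix x y c d
  assume xy: "(x, y) \<in> syntactic_preorder A" and cd: "(c, d) \<in> syntactic_preorder A"
  show "(x * c, y * d) \<in> syntactic_preorder A"
  proof (rule syntactic_preorderI)
    fix u v
    assume "u * El (y * d) * v \<in> A"
    then have "(u * El y) * El d * v \<in> A"
      by (simp only: El_times mult.assoc)
    then have "(u * El y) * El c * v \<in> A"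
      using cd unfolding syntactic_preorder_def by blast
    then have "u * El y * (El c * v) \<in> A"
      by (simp only: mult.assoc)
    then have "u * El x * (El c * v) \<in> A"
      using xy unfolding syntactic_preorder_def by blast
    then show "u * El (x * c) * v \<in> A"
      by (simp only: El_times mult.assoc)
  qed
qed

lemma DSC_syntactic_preorder:
  assumes "DSC TYPE('a::semigroup_mult)"
    and "(x, y) \<in> syntactic_preorder A" and "El (x::'a) \<in> A"
  shows "El y \<in> A"
proof -
  have "sym (syntactic_preorder A)"
    using assms(1) diagonal_subsemigroup_syntactic_preorder
    by (auto simp: DSC_def is_congruence_def)
  then have "(y, x) \<in> syntactic_preorder A"
    using assms(2) by (rule symD)
  then have "1 * El x * 1 \<in> A \<longrightarrow> 1 * El y * 1 \<in> A"
    unfolding syntactic_preorder_def by blast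
  then show ?thesis
    using assms(3) by simp
qed

lemma DSC_simple:
  assumes "DSC TYPE('a::semigroup_mult)"
  shows "\<exists>u v. El (b::'a) = u * El a * v"
proof -
  let ?A = "{u * El a * v | u v. True}"
  have "(a, b) \<in> syntactic_preorder ?A"
    by (rule syntactic_preorderI) blast
  moreover have "El a \<in> ?A"
    by (metis (mono_tags, lifting) mem_Collect_eq mult_1_left mult_1_right)
  ultimately show ?thesis
    using DSC_syntactic_preorder[OF assms] by blast
qed

lemma DSC_right_divisible:
  assumes dsc: "DSC TYPE('a::{semigroup_mult,finite})"
  shows "\<exists>t. (b::'a) = a * t"
proof -
  let ?A = "{El (a * t) | t. True}"
  have "(a * b, b) \<in> syntactic_preorder ?A"
  proof (rule syntactic_preorderI)
    fix u v
    assume uv: "u * El b * v \<in> ?A"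
    show "u * El (a * b) * v \<in> ?A"
    proof (cases u)
      case One
      obtain z where "El b * v = El z"
        using El_times_in_range by blast
      then have "u * El (a * b) * v = El (a * z)"
        using One by (metis One_eq_1 mult_1_left mult.assoc times_with_one.simps(3))
      then show ?thesis by blast
    next
      case (El u')
      obtain t where t: "El (a * t) = El u' * (El b * v)"
        using uv El by (auto simp: mult.assoc[symmetric])
      obtain p q where "El u' = p * El (a * t) * q"
        using DSC_simple[OF dsc] by blast
      with t obtain r where r: "El u' = El (a * t) * r"
        using finite_monoid_stable by blast
      obtain z where "El t * (r * (El (a * b) * v)) = El z"
        using El_times_in_range by blast
      then have "u * El (a * b) * v = El (a * z)"
        using El r by (metis mult.assoc times_with_one.simps(3))
      then show ?thesis by blast
    qed
  qed
  moreover have "El (a * b) \<in> ?A" by blast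
  ultimately have "El b \<in> ?A"
    using DSC_syntactic_preorder[OF dsc] by blast
  then show ?thesis by auto
qed

datatype 'a opposite = Opp (un_opp: 'a)

instantiation opposite :: (semigroup_mult) semigroup_mult
begin

fun times_opposite :: "'a opposite \<Rightarrow> 'a opposite \<Rightarrow> 'a opposite" where
  "times_opposite (Opp x) (Opp y) = Opp (y * x)"

instance proof
  fix a b c :: "'a opposite"
  show "a * b * c = a * (b * c)"
    by (cases a; cases b; cases c) (simp add: mult.assoc)
qed

end

lemma UNIV_opposite: "(UNIV :: 'a opposite set) = range Opp"
  by (metis opposite.collapse surj_def)

instance opposite :: (finite) finite
  by standard (simp add: UNIV_opposite)

lemma DSC_opposite:
  assumes "DSC TYPE('a::semigroup_mult)"
  shows "DSC TYPE('a opposite)"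
  unfolding DSC_def is_congruence_def
proof (intro allI impI conjI)
  fix R :: "('a opposite \<times> 'a opposite) set"
  assume R: "diagonal_subsemigroup R"
  then show "diagonal_subsemigroup R" .
  define R' where "R' = {(x, y). (Opp x, Opp y) \<in> R}"
  have R_R': "(a, b) \<in> R \<longleftrightarrow> (un_opp a, un_opp b) \<in> R'" for a b
    by (simp add: R'_def)
  have "diagonal_subsemigroup R'"
    unfolding diagonal_subsemigroup_def
  proof (intro conjI allI impI)
    fix x y c d
    assume "(x, y) \<in> R'" "(c, d) \<in> R'"
    then have "(Opp c * Opp x, Opp d * Opp y) \<in> R"
      using R unfolding diagonal_subsemigroup_def R'_def by blast
    then show "(x * c, y * d) \<in> R'"
      by (simp add: R'_def)
  qed (use R in \<open>simp add: diagonal_subsemigroup_def R'_def\<close>)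
  then have "sym R'" "trans R'"
    using assms by (auto simp: DSC_def is_congruence_def)
  then show "sym R" "trans R"
    by (metis R_R' symI symD, metis R_R' transI transD)
qed

lemma DSC_left_divisible:
  assumes "DSC TYPE('a::{semigroup_mult,finite})"
  shows "\<exists>t. (b::'a) = t * a"
proof -
  obtain t where "Opp b = Opp a * t"
    using DSC_right_divisible[OF DSC_opposite[OF assms]] by blast
  then show ?thesis
    by (cases t) auto
qed

lemma is_groupI_divisible:
  assumes right: "\<And>a b::'a. \<exists>t. b = a * t" and left: "\<And>a b::'a. \<exists>t. b = t * a"
  shows "is_group TYPE('a::semigroup_mult)"
proof -
  fix a :: 'a
  obtain e where "a * e = a"
    using right[where a=a and b=a] by metis
  have right_unit: "b * e = b" for b
  proof -
    obtain y where "b = y * a" using left[where a=a and b=b] by blast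
    then show ?thesis using \<open>a * e = a\<close> by (simp add: mult.assoc)
  qed
  obtain f where "f * a = a"
    using left[where a=a and b=a] by metis
  have left_unit: "f * b = b" for b
  proof -
    obtain y where "b = a * y" using right[where a=a and b=b] by blast
    then show ?thesis using \<open>f * a = a\<close> by (simp add: mult.assoc[symmetric])
  qed
  have "f = e"
    using right_unit[of f] left_unit[of e] by simp
  have "\<exists>y. x * y = e \<and> y * x = e" for x
  proof -
    obtain c d where c: "x * c = e" and d: "d * x = e"
      using right[where a=x and b=e] left[where a=x and b=e] by metis
    have "d = d * (x * c)"
      using c right_unit by simp
    also have "\<dots> = c"
      using d left_unit \<open>f = e\<close> by (simp add: mult.assoc[symmetric])
    finally show ?thesis
      using c d by blast
  qed
  then show ?thesis
    unfolding is_group_def using right_unit left_unit \<open>f = e\<close> by blast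
qed

lemma group_diagonal_subsemigroup_trans:
  assumes "is_group TYPE('a::semigroup_mult)" and R: "diagonal_subsemigroup (R :: ('a \<times> 'a) set)"
  shows "trans R"
proof (rule transI)
  obtain e :: 'a where e: "\<And>x. e * x = x" "\<And>x. x * e = x"
    and inv: "\<And>x. \<exists>y. x * y = e \<and> y * x = e"
    using assms(1) unfolding is_group_def by blast
  fix a b c assume "(a, b) \<in> R" and "(b, c) \<in> R"
  obtain b' where b': "b * b' = e" "b' * b = e" using inv by blast
  have "(a * b' * b, b * b' * c) \<in> R"
    using R \<open>(a, b) \<in> R\<close> \<open>(b, c) \<in> R\<close> unfolding diagonal_subsemigroup_def by blast
  then show "(a, c) \<in> R"
    using b' e by (simp add: mult.assoc)
qed

lemma finite_group_diagonal_subsemigroup_sym: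
  assumes "is_group TYPE('a::{semigroup_mult,finite})" and R: "diagonal_subsemigroup (R :: ('a \<times> 'a) set)"
  shows "sym R"
proof (rule symI)
  obtain e :: 'a where e: "\<And>x. e * x = x" "\<And>x. x * e = x"
    and inv: "\<And>x. \<exists>y. x * y = e \<and> y * x = e"
    using assms(1) unfolding is_group_def by blast
  have diag: "(s, s) \<in> R" and mult: "(x, y) \<in> R \<Longrightarrow> (c, d) \<in> R \<Longrightarrow> (x * c, y * d) \<in> R" for s x y c d
    using R by (simp_all add: diagonal_subsemigroup_def)
  have cancel: "x * c = x * d \<Longrightarrow> c = d" for x c d :: 'a
    by (metis inv e(1) mult.assoc)
  have right_inverse_left: "x * c = e \<Longrightarrow> c * x = e" for x c :: 'a
    by (metis inv e mult.assoc)
  fix a b assume ab: "(a, b) \<in> R"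
  let ?f = "\<lambda>(c, d). (a * c, b * d)"
  have "?f ` R = R"
    using mult[OF ab] cancel by (intro endo_inj_surj) (auto simp: inj_on_def)
  then obtain c d where cd: "(c, d) \<in> R" "a * c = e" "b * d = e"
    using diag[of e] by force
  have "(b * c * a, b * d * a) \<in> R"
    using mult[OF mult[OF diag cd(1)] diag] .
  moreover have "b * c * a = b" "b * d * a = a"
    using cd right_inverse_left e by (simp_all add: mult.assoc)
  ultimately show "(b, a) \<in> R" by simp
qed

theorem mainTheorem7:
  fixes S :: "'a::{semigroup_mult, finite} itself"
  shows "DSC S \<longleftrightarrow> is_group S"
proof -
  have "DSC S \<longleftrightarrow> DSC TYPE('a)" "is_group S \<longleftrightarrow> is_group TYPE('a)"
    by (simp_all add: DSC_def is_group_def)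
  moreover have "DSC TYPE('a) \<Longrightarrow> is_group TYPE('a)"
    using is_groupI_divisible DSC_right_divisible DSC_left_divisible by blast
  moreover have "is_group TYPE('a) \<Longrightarrow> DSC TYPE('a)"
    using group_diagonal_subsemigroup_trans finite_group_diagonal_subsemigroup_sym by (auto simp: DSC_def is_congruence_def)
  ultimately show ?thesis by blast
qed

end
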